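(* Let $\mathcal{G}$ be a signed graph on vertex set $\{1,\dots,n\}$ with signed adjacency entries $a_{ij}$ and neighbor sets $N_i$, and assume $\mathcal{G}$ is structurally balanced with gauge transformation $G_t=\mathrm{diag}(\sigma_1,\dots,\sigma_n)$, $\sigma_i\in\{\pm1\}$. Consider the absolute nonlinear flow $$\dot x_i = -\sum_{j\in N_i}\big[f(x_i)-\mathrm{sgn}(a_{ij})f(x_j)\big],\quad i=1,\dots,n,$$ where $f:\mathbb{R}\to\mathbb{R}$ is a smooth odd function. Suppose $\mathcal{G}$ has a non-trivial signed automorphism $\varphi'=g\circ\varphi\circ g$, where $\varphi$ is induced by a non-identity automorphism $\phi$ of $\mathcal{G}$. Then for any vertex $l$ with $\phi(l)=l$ chosen as the leader, the leader-follower network is not accessible from the origin in $\mathbb{R}^{n-1}$. Moreover, the same conclusion holds when $f$ is a smooth even function, provided $\varphi'$ preserves edge signs, i.e. $\mathrm{sgn}(a_{ij})=\mathrm{sgn}(a_{\phi(i)\phi(j)})$ for all edges $ij$.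
   Context: A signed graph has edges with positive or negative weights $a_{ij}$ (nonzero iff $ij$ is an edge). It is structurally balanced if its vertex set admits a bipartition such that edges within each part have positive weight and edges between the parts have negative weight; equivalently there is a gauge transformation $G_t=\mathrm{diag}(\sigma)$, $\sigma_i\in\{\pm1\}$, such that $G_tA_sG_t$ has only nonnegative entries ($A_s$ the signed adjacency matrix), i.e. $\sigma_i\sigma_j=\mathrm{sgn}(a_{ij})$ for every edge $ij$. An automorphism of $\mathcal{G}$ is a permutation $\phi$ of the vertices with $\phi(i)\phi(j)$ an edge iff $ij$ is an edge; it induces $\varphi:\mathbb{R}^n\to\mathbb{R}^n$, $[\varphi(x)]_i=x_{\phi(i)}$. The gauge induces $g:\mathbb{R}^n\to\mathbb{R}^n$, $[g(x)]_i=\sigma_i x_i$. The signed automorphism is $\varphi'=g\circ\varphi\circ g$, so $[\varphi'(x)]_i=\sigma_i\sigma_{\phi(i)}x_{\phi(i)}$; it is non-trivial when $\phi$ is not the identity. For a chosen leader vertex $l$, the leader-follower network is the control system on $\mathbb{R}^{n-1}$ with state $(x_i)_{i\neq l}$, evolving by $\dot x_i=F_i(x)$ for $i\ne l$ where $F$ is the flow's right-hand side and the leader's state $x_l=u$ is treated as the control input. For a control system $\dot x=F(x,u)$, the accessible set $\mathcal{A}(x_0,\le T)$ is the set of all endpoints $\theta(\tau)$, $0\le\tau\le T$, of trajectories $\theta$ with $\theta(0)=x_0$; the system is accessible from $x_0$ if $\mathcal{A}(x_0,\le T)$ has nonempty interior for every $T>0$. *)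

theory Defs
  imports "HOL-Analysis.Analysis"
begin

text \<open>Vertices form a finite type 'v (so n = CARD('v)); the signed adjacency
  matrix is a :: 'v => 'v => real, with ij an edge iff a i j ~= 0.\<close>

definition signed_graph :: "('v \<Rightarrow> 'v \<Rightarrow> real) \<Rightarrow> bool" where
  "signed_graph a \<longleftrightarrow> (\<forall>i j. a i j = a j i) \<and> (\<forall>i. a i i = 0)"

definition nbrs :: "('v \<Rightarrow> 'v \<Rightarrow> real) \<Rightarrow> 'v \<Rightarrow> 'v set" where
  "nbrs a i = {j. a i j \<noteq> 0}"

definition balanced_with_gauge :: "('v \<Rightarrow> 'v \<Rightarrow> real) \<Rightarrow> ('v \<Rightarrow> real) \<Rightarrow> bool" where
  "balanced_with_gauge a \<sigma> \<longleftrightarrow>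
     (\<forall>i. \<sigma> i = 1 \<or> \<sigma> i = -1) \<and> (\<forall>i j. a i j \<noteq> 0 \<longrightarrow> \<sigma> i * \<sigma> j = sgn (a i j))"

definition graph_automorphism :: "('v \<Rightarrow> 'v \<Rightarrow> real) \<Rightarrow> ('v \<Rightarrow> 'v) \<Rightarrow> bool" where
  "graph_automorphism a \<phi> \<longleftrightarrow> bij \<phi> \<and> (\<forall>i j. a (\<phi> i) (\<phi> j) \<noteq> 0 \<longleftrightarrow> a i j \<noteq> 0)"

definition smooth_fun :: "(real \<Rightarrow> real) \<Rightarrow> bool" where
  "smooth_fun f \<longleftrightarrow> (\<forall>k x. ((deriv ^^ k) f) field_differentiable (at x))"

definition abs_flow :: "(real \<Rightarrow> real) \<Rightarrow> ('v::finite \<Rightarrow> 'v \<Rightarrow> real) \<Rightarrow> real ^ 'v \<Rightarrow> real ^ 'v" where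
  "abs_flow f a x = (\<chi> i. - (\<Sum>j\<in>nbrs a i. f (x $ i) - sgn (a i j) * f (x $ j)))"

text \<open>The follower state space R^(n-1) is
  represented as the coordinate hyperplane {x. x $ l = 0} of R^n; the leader
  coordinate is replaced by the control input u.\<close>
definition lf_field :: "(real ^ 'v \<Rightarrow> real ^ 'v) \<Rightarrow> 'v::finite \<Rightarrow> real ^ 'v \<Rightarrow> real \<Rightarrow> real ^ 'v" where
  "lf_field F l x u = (\<chi> i. if i = l then 0 else F (\<chi> j. if j = l then u else x $ j) $ i)"

definition follower_space :: "'v::finite \<Rightarrow> (real ^ 'v) set" where
  "follower_space l = {x. x $ l = 0}"

definition lf_trajectory ::
  "(real ^ 'v \<Rightarrow> real ^ 'v) \<Rightarrow> 'v::finite \<Rightarrow> real ^ 'v \<Rightarrow> (real \<Rightarrow> real ^ 'v) \<Rightarrow> (real \<Rightarrow> real) \<Rightarrow> real \<Rightarrow> bool" where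
  "lf_trajectory F l x0 \<theta> u \<tau> \<longleftrightarrow> \<theta> 0 = x0 \<and>
     (\<forall>t\<in>{0..\<tau>}. (\<theta> has_vector_derivative lf_field F l (\<theta> t) (u t)) (at t within {0..\<tau>}))"

definition accessible_set ::
  "(real ^ 'v \<Rightarrow> real ^ 'v) \<Rightarrow> 'v::finite \<Rightarrow> real ^ 'v \<Rightarrow> real \<Rightarrow> (real ^ 'v) set" where
  "accessible_set F l x0 T =
     {\<theta> \<tau> | \<theta> u \<tau>. 0 \<le> \<tau> \<and> \<tau> \<le> T \<and> lf_trajectory F l x0 \<theta> u \<tau>}"

text \<open>Accessibility: the accessible set has nonempty interior in the follower
  space (interior relative to the hyperplane, which is a copy of R^(n-1)).\<close>
definition lf_accessible :: "(real ^ 'v \<Rightarrow> real ^ 'v) \<Rightarrow> 'v::finite \<Rightarrow> real ^ 'v \<Rightarrow> bool" where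
  "lf_accessible F l x0 \<longleftrightarrow> (\<forall>T>0. \<exists>U. open U \<and> U \<inter> follower_space l \<noteq> {} \<and>
       U \<inter> follower_space l \<subseteq> accessible_set F l x0 T)"

end

theory Submission
  imports Defs
begin

text \<open>The signed automorphism \<phi>' commutes with the leader-follower vector field
  (because \<phi> fixes the leader and f is odd, resp. \<phi> preserves signs and f is even).
  Since the field is locally Lipschitz, trajectories from the origin are unique, so every
  trajectory from the origin is fixed by \<phi>'. Hence the accessible set lies in the fixed
  subspace of \<phi>' inside the follower space, which is proper because \<phi> moves some
  follower, and so has empty interior there.\<close>

section \<open>Uniqueness for Lipschitz differential equations\<close>

lemma has_real_derivative_inner_self:
  fixes d :: "real \<Rightarrow> 'a::real_inner"
  assumes "(d has_vector_derivative D) (at t within S)"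
  shows "((\<lambda>t. d t \<bullet> d t) has_real_derivative 2 * (d t \<bullet> D)) (at t within S)"
proof -
  have "((\<lambda>t. d t \<bullet> d t) has_derivative (\<lambda>h. d t \<bullet> (h *\<^sub>R D) + (h *\<^sub>R D) \<bullet> d t)) (at t within S)"
    using assms by (intro derivative_eq_intros) (auto simp: has_vector_derivative_def)
  moreover have "(\<lambda>h. d t \<bullet> (h *\<^sub>R D) + (h *\<^sub>R D) \<bullet> d t) = (\<lambda>h. 2 * (d t \<bullet> D) * h)"
    by (auto simp: inner_commute algebra_simps)
  ultimately show ?thesis
    by (simp add: has_field_derivative_def)
qed

text \<open>Gronwall-type argument: the weighted energy e^(-2Lt) |\<theta> t - \<eta> t|^2 is
  nonincreasing and vanishes at 0.\<close>

lemma lipschitz_ode_solutions_eq: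
  fixes \<theta> \<eta> :: "real \<Rightarrow> 'a::real_inner"
  assumes \<theta>: "\<And>t. t \<in> {0..\<tau>} \<Longrightarrow> (\<theta> has_vector_derivative A t) (at t within {0..\<tau>})"
    and \<eta>: "\<And>t. t \<in> {0..\<tau>} \<Longrightarrow> (\<eta> has_vector_derivative B t) (at t within {0..\<tau>})"
    and init: "\<theta> 0 = \<eta> 0"
    and lip: "\<And>t. t \<in> {0..\<tau>} \<Longrightarrow> norm (A t - B t) \<le> L * norm (\<theta> t - \<eta> t)"
    and t: "t \<in> {0..\<tau>}"
  shows "\<theta> t = \<eta> t"
proof -
  define d where "d = (\<lambda>t. \<theta> t - \<eta> t)"
  define g where "g = (\<lambda>t. exp (- 2 * L * t) * (d t \<bullet> d t))"
  have g_deriv: "\<exists>y. (g has_real_derivative y) (at s within {0..\<tau>}) \<and> y \<le> 0"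
    if s: "s \<in> {0..\<tau>}" for s
  proof (intro exI conjI)
    have d': "(d has_vector_derivative (A s - B s)) (at s within {0..\<tau>})"
      unfolding d_def using \<theta>[OF s] \<eta>[OF s] by (auto intro!: derivative_eq_intros)
    have e': "((\<lambda>t. exp (- 2 * L * t)) has_real_derivative (- 2 * L) * exp (- 2 * L * s))
        (at s within {0..\<tau>})"
      by (auto intro!: derivative_eq_intros)
    show "(g has_real_derivative
        exp (- 2 * L * s) * (2 * (d s \<bullet> (A s - B s)) - 2 * L * (d s \<bullet> d s))) (at s within {0..\<tau>})"
      unfolding g_def using DERIV_mult[OF e' has_real_derivative_inner_self[OF d']]
      by (simp add: algebra_simps)
    have "d s \<bullet> (A s - B s) \<le> norm (d s) * norm (A s - B s)"
      by (rule Cauchy_Schwarz_ineq2[THEN order_trans[OF abs_ge_self]])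
    also have "\<dots> \<le> norm (d s) * (L * norm (d s))"
      using lip[OF s] by (simp add: d_def mult_left_mono)
    also have "\<dots> = L * (d s \<bullet> d s)"
      by (simp add: power2_norm_eq_inner[symmetric] power2_eq_square)
    finally show "exp (- 2 * L * s) * (2 * (d s \<bullet> (A s - B s)) - 2 * L * (d s \<bullet> d s)) \<le> 0"
      by (simp add: mult_nonneg_nonpos)
  qed
  have "continuous_on {0..\<tau>} g"
    using g_deriv by (meson DERIV_continuous continuous_at_imp_continuous_on continuous_on_eq_continuous_within)
  have "g t \<le> g 0"
  proof (rule DERIV_nonpos_imp_decreasing_open[of 0 t g])
    show "0 \<le> t" using t by simp
    show "continuous_on {0..t} g"
      using t by (intro continuous_on_subset[OF \<open>continuous_on {0..\<tau>} g\<close>]) auto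
    fix x assume x: "0 < x" "x < t"
    then have "at x within {0..\<tau>} = at x" using t by (intro at_within_Icc_at) auto
    with g_deriv[of x] x t show "\<exists>y. (g has_real_derivative y) (at x) \<and> y \<le> 0" by auto
  qed
  with init have "exp (- 2 * L * t) * (d t \<bullet> d t) \<le> 0" by (simp add: g_def d_def)
  then have "d t \<bullet> d t \<le> 0" by (simp add: mult_le_0_iff)
  then show ?thesis by (metis d_def eq_iff_diff_eq_0 inner_gt_zero_iff not_le)
qed

section \<open>Symmetries of a leader-follower network obstruct accessibility\<close>

definition lf_locally_lipschitz :: "(real ^ 'v \<Rightarrow> real ^ 'v) \<Rightarrow> 'v::finite \<Rightarrow> bool" where
  "lf_locally_lipschitz F l \<longleftrightarrow> (\<forall>R. \<exists>L. \<forall>x y u. norm x \<le> R \<longrightarrow> norm y \<le> R \<longrightarrow>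
     norm (lf_field F l x u - lf_field F l y u) \<le> L * norm (x - y))"

lemma lf_trajectory_fixed_by_equivariant_map:
  assumes M: "bounded_linear M"
    and equiv: "\<And>x u. lf_field F l (M x) u = M (lf_field F l x u)"
    and lip: "lf_locally_lipschitz F l"
    and traj: "lf_trajectory F l 0 \<theta> u \<tau>" and t: "t \<in> {0..\<tau>}"
  shows "M (\<theta> t) = \<theta> t"
proof -
  have \<theta>0: "\<theta> 0 = 0" and \<theta>: "\<And>t. t \<in> {0..\<tau>} \<Longrightarrow>
      (\<theta> has_vector_derivative lf_field F l (\<theta> t) (u t)) (at t within {0..\<tau>})"
    using traj by (auto simp: lf_trajectory_def)
  have M\<theta>: "((\<lambda>t. M (\<theta> t)) has_vector_derivative lf_field F l (M (\<theta> t)) (u t)) (at t within {0..\<tau>})"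
    if "t \<in> {0..\<tau>}" for t
    using bounded_linear.has_vector_derivative[OF M \<theta>[OF that]] by (simp add: equiv)
  have "bounded (\<theta> ` {0..\<tau>})" "bounded ((\<lambda>t. M (\<theta> t)) ` {0..\<tau>})"
    using \<theta> M\<theta> by (intro compact_imp_bounded compact_continuous_image compact_Icc
        continuous_on_vector_derivative; fast)+
  then obtain R where R: "\<And>t. t \<in> {0..\<tau>} \<Longrightarrow> norm (\<theta> t) \<le> R \<and> norm (M (\<theta> t)) \<le> R"
    unfolding bounded_iff by (meson image_eqI max.cobounded1 max.cobounded2 order_trans)
  obtain L where L: "\<And>x y u. norm x \<le> R \<Longrightarrow> norm y \<le> R \<Longrightarrow>
      norm (lf_field F l x u - lf_field F l y u) \<le> L * norm (x - y)"
    using lip unfolding lf_locally_lipschitz_def by blast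
  have "\<theta> t = M (\<theta> t)"
  proof (rule lipschitz_ode_solutions_eq[OF \<theta> M\<theta> _ _ t])
    show "\<theta> 0 = M (\<theta> 0)"
      by (simp add: \<theta>0 linear_simps(3)[OF M])
    show "norm (lf_field F l (\<theta> s) (u s) - lf_field F l (M (\<theta> s)) (u s)) \<le> L * norm (\<theta> s - M (\<theta> s))"
      if "s \<in> {0..\<tau>}" for s
      using R[OF that] by (intro L) auto
  qed
  then show ?thesis by simp
qed

lemma accessible_set_fixed_by_equivariant_map:
  assumes "bounded_linear M"
    and "\<And>x u. lf_field F l (M x) u = M (lf_field F l x u)"
    and "lf_locally_lipschitz F l"
    and "p \<in> accessible_set F l 0 T"
  shows "M p = p"
  using assms lf_trajectory_fixed_by_equivariant_map
  by (fastforce simp: accessible_set_def)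

lemma linear_fixes_subspace_if_fixes_open_part:
  fixes M :: "'a::real_normed_vector \<Rightarrow> 'a"
  assumes M: "linear M" and S: "subspace S" and U: "open U"
    and p: "p \<in> U \<inter> S" and e: "e \<in> S"
    and fixed: "\<And>q. q \<in> U \<inter> S \<Longrightarrow> M q = q"
  shows "M e = e"
proof (cases "e = 0")
  case True
  then show ?thesis using linear_0[OF M] by simp
next
  case False
  obtain \<epsilon> where "\<epsilon> > 0" "ball p \<epsilon> \<subseteq> U"
    using U p open_contains_ball by blast
  define c where "c = \<epsilon> / (2 * norm e)"
  have "c > 0" using \<open>\<epsilon> > 0\<close> False by (simp add: c_def)
  have "norm (c *\<^sub>R e) < \<epsilon>" using \<open>\<epsilon> > 0\<close> False by (simp add: c_def)
  then have "p + c *\<^sub>R e \<in> U \<inter> S"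
    using \<open>ball p \<epsilon> \<subseteq> U\<close> p e S by (auto simp: dist_norm subspace_add subspace_scale)
  then have "M p + c *\<^sub>R M e = p + c *\<^sub>R e"
    using fixed by (metis linear_add[OF M] linear_scale[OF M])
  with fixed[OF p] \<open>c > 0\<close> show ?thesis by simp
qed

lemma not_lf_accessible_if_equivariant:
  assumes M: "bounded_linear M"
    and equiv: "\<And>x u. lf_field F l (M x) u = M (lf_field F l x u)"
    and lip: "lf_locally_lipschitz F l"
    and e: "e $ l = 0" "M e \<noteq> e"
  shows "\<not> lf_accessible F l 0"
proof
  assume "lf_accessible F l 0"
  then obtain U where U: "open U" "U \<inter> follower_space l \<noteq> {}"
      "U \<inter> follower_space l \<subseteq> accessible_set F l 0 1"
    unfolding lf_accessible_def by (meson zero_less_one)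
  have "subspace (follower_space l)"
    by (auto simp: subspace_def follower_space_def)
  moreover have "M q = q" if "q \<in> U \<inter> follower_space l" for q
    using U(3) that accessible_set_fixed_by_equivariant_map[OF M equiv lip] by blast
  moreover obtain p where "p \<in> U \<inter> follower_space l"
    using U(2) by blast
  moreover have "e \<in> follower_space l"
    using e(1) by (simp add: follower_space_def)
  ultimately have "M e = e"
    using linear_fixes_subspace_if_fixes_open_part[OF bounded_linear.linear[OF M] _ U(1)] by blast
  with e(2) show False ..
qed

text \<open>With c i = \<sigma> i * \<sigma> (\<phi> i) this is the signed automorphism \<phi>' = g \<circ> \<phi> \<circ> g.\<close>

definition coupling_equivariant ::
  "('v \<Rightarrow> 'v \<Rightarrow> real) \<Rightarrow> (real \<Rightarrow> real) \<Rightarrow> ('v \<Rightarrow> real) \<Rightarrow> ('v \<Rightarrow> 'v) \<Rightarrow> bool" where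
  "coupling_equivariant a f c \<phi> \<longleftrightarrow> (\<forall>i j z w. a i j \<noteq> 0 \<longrightarrow>
     f (c i * z) - sgn (a i j) * f (c j * w) = c i * (f z - sgn (a (\<phi> i) (\<phi> j)) * f w))"

definition signed_permutation :: "('v \<Rightarrow> real) \<Rightarrow> ('v \<Rightarrow> 'v) \<Rightarrow> real ^ 'v \<Rightarrow> real ^ 'v" where
  "signed_permutation c \<phi> x = (\<chi> i. c i * x $ \<phi> i)"

lemma bounded_linear_signed_permutation:
  "bounded_linear (signed_permutation c \<phi> :: real ^ 'v::finite \<Rightarrow> real ^ 'v)"
  unfolding linear_conv_bounded_linear[symmetric]
  by (rule linearI) (auto simp: signed_permutation_def vec_eq_iff algebra_simps)

lemma lf_field_signed_permutation:
  assumes equiv: "\<And>x. F (signed_permutation c \<phi> x) = signed_permutation c \<phi> (F x)"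
    and "inj \<phi>" "\<phi> l = l" "c l = 1"
  shows "lf_field F l (signed_permutation c \<phi> x) u = signed_permutation c \<phi> (lf_field F l x u)"
proof -
  have \<phi>_eq_l: "\<phi> j = l \<longleftrightarrow> j = l" for j
    using assms(2,3) by (metis inj_eq)
  have "(\<chi> j. if j = l then u else signed_permutation c \<phi> x $ j)
      = signed_permutation c \<phi> (\<chi> j. if j = l then u else x $ j)"
    using assms(3,4) by (auto simp: vec_eq_iff signed_permutation_def \<phi>_eq_l)
  then show ?thesis
    by (simp add: lf_field_def equiv vec_eq_iff \<phi>_eq_l) (simp add: signed_permutation_def \<phi>_eq_l)
qed

lemma nbrs_image_automorphism:
  assumes "graph_automorphism a \<phi>"
  shows "\<phi> ` nbrs a i = nbrs a (\<phi> i)"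
proof -
  have "bij \<phi>" and edge: "\<And>i j. a (\<phi> i) (\<phi> j) \<noteq> 0 \<longleftrightarrow> a i j \<noteq> 0"
    using assms by (auto simp: graph_automorphism_def)
  then show ?thesis
    unfolding nbrs_def by (auto simp: image_iff) (metis bij_pointE)
qed

lemma abs_flow_signed_permutation:
  assumes aut: "graph_automorphism a \<phi>"
    and "coupling_equivariant a f c \<phi>"
  shows "abs_flow f a (signed_permutation c \<phi> x) = signed_permutation c \<phi> (abs_flow f a x)"
proof -
  have "inj \<phi>" using aut by (simp add: graph_automorphism_def bij_is_inj)
  have "abs_flow f a (signed_permutation c \<phi> x) $ i = c i * abs_flow f a x $ \<phi> i" for i
  proof -
    define h where "h k = f (x $ \<phi> i) - sgn (a (\<phi> i) k) * f (x $ k)" for k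
    have "abs_flow f a (signed_permutation c \<phi> x) $ i = - (\<Sum>j\<in>nbrs a i. c i * h (\<phi> j))"
      unfolding abs_flow_def signed_permutation_def h_def
      using assms(2) unfolding coupling_equivariant_def
      by (simp, intro arg_cong[where f=uminus] sum.cong refl) (simp add: nbrs_def)
    also have "\<dots> = - c i * sum h (\<phi> ` nbrs a i)"
      using sum.reindex[OF inj_on_subset[OF \<open>inj \<phi>\<close> subset_UNIV], of h "nbrs a i"]
      by (simp add: sum_distrib_left sum_negf)
    also have "\<dots> = c i * abs_flow f a x $ \<phi> i"
      by (simp add: nbrs_image_automorphism[OF aut] abs_flow_def h_def)
    finally show ?thesis .
  qed
  then show ?thesis
    by (simp add: vec_eq_iff signed_permutation_def)
qed

lemma smooth_fun_lipschitz_on_interval: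
  assumes "smooth_fun f"
  obtains B where "B \<ge> 0" "\<And>x y. \<bar>x\<bar> \<le> R \<Longrightarrow> \<bar>y\<bar> \<le> R \<Longrightarrow> \<bar>f x - f y\<bar> \<le> B * \<bar>x - y\<bar>"
proof -
  have "f field_differentiable (at x)" "deriv f field_differentiable (at x)" for x
    using assms[unfolded smooth_fun_def, rule_format, of 0 x] assms[unfolded smooth_fun_def, rule_format, of 1 x]
    by simp_all
  then have f': "\<And>x. (f has_field_derivative deriv f x) (at x)"
    and "continuous_on {-R..R} (deriv f)"
    by (auto simp: DERIV_deriv_iff_field_differentiable
        intro!: continuous_at_imp_continuous_on field_differentiable_imp_continuous_at)
  then have "bounded (deriv f ` {-R..R})"
    by (intro compact_imp_bounded compact_continuous_image compact_Icc)
  then obtain B where "B > 0" and B: "\<And>x. x \<in> {-R..R} \<Longrightarrow> norm (deriv f x) \<le> B"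
    unfolding bounded_pos by blast
  have "norm (f x - f y) \<le> B * norm (x - y)" if "\<bar>x\<bar> \<le> R" "\<bar>y\<bar> \<le> R" for x y
    by (rule field_differentiable_bound[of "{-R..R}" f "deriv f"])
      (use that B f' in \<open>auto intro: has_field_derivative_at_within\<close>)
  with \<open>B > 0\<close> show ?thesis by (intro that[of B]) auto
qed

lemma abs_flow_diff_bound:
  fixes X Y :: "real ^ 'v::finite"
    and K :: real
  assumes K: "\<And>j. \<bar>f (X $ j) - f (Y $ j)\<bar> \<le> K"
  shows "\<bar>abs_flow f a X $ i - abs_flow f a Y $ i\<bar> \<le> 2 * real CARD('v) * K"
proof -
  have "K \<ge> 0"
    using K[of i] abs_ge_zero order_trans by blast
  have "\<bar>abs_flow f a X $ i - abs_flow f a Y $ i\<bar>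
      = \<bar>\<Sum>j\<in>nbrs a i. (f (Y $ i) - f (X $ i)) - sgn (a i j) * (f (Y $ j) - f (X $ j))\<bar>"
    unfolding abs_flow_def by (simp add: sum_subtractf[symmetric] algebra_simps)
  also have "\<dots> \<le> (\<Sum>j\<in>nbrs a i. 2 * K)"
  proof (rule order_trans[OF sum_abs], rule sum_mono)
    fix j
    have "\<bar>sgn (a i j) * (f (Y $ j) - f (X $ j))\<bar> \<le> K"
      using K[of j] \<open>K \<ge> 0\<close> by (simp add: abs_mult abs_sgn_eq abs_minus_commute)
    then show "\<bar>(f (Y $ i) - f (X $ i)) - sgn (a i j) * (f (Y $ j) - f (X $ j))\<bar> \<le> 2 * K"
      using K[of i] by (simp add: abs_minus_commute)
  qed
  also have "\<dots> \<le> (\<Sum>j\<in>(UNIV::'v set). 2 * K)"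
    using \<open>K \<ge> 0\<close> by (intro sum_mono2) auto
  finally show ?thesis by simp
qed

lemma lf_locally_lipschitz_abs_flow:
  fixes a :: "'v::finite \<Rightarrow> 'v \<Rightarrow> real"
  assumes "smooth_fun f"
  shows "lf_locally_lipschitz (abs_flow f a) l"
  unfolding lf_locally_lipschitz_def
proof
  fix R
  obtain B where "B \<ge> 0" and B: "\<And>x y. \<bar>x\<bar> \<le> R \<Longrightarrow> \<bar>y\<bar> \<le> R \<Longrightarrow> \<bar>f x - f y\<bar> \<le> B * \<bar>x - y\<bar>"
    using smooth_fun_lipschitz_on_interval[OF assms, where R=R] by blast
  define n where "n = real CARD('v)"
  have "norm (lf_field (abs_flow f a) l x u - lf_field (abs_flow f a) l y u)
      \<le> n * (2 * n * B) * norm (x - y)"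
    if "norm x \<le> R" "norm y \<le> R" for x y :: "real ^ 'v" and u
  proof -
    define X where "X = (\<chi> j. if j = l then u else x $ j)"
    define Y where "Y = (\<chi> j. if j = l then u else y $ j)"
    have f_diff: "\<bar>f (X $ j) - f (Y $ j)\<bar> \<le> B * norm (x - y)" for j
    proof (cases "j = l")
      case True
      then show ?thesis using \<open>B \<ge> 0\<close> by (simp add: X_def Y_def)
    next
      case False
      have "\<bar>x $ j\<bar> \<le> R" "\<bar>y $ j\<bar> \<le> R"
        using that component_le_norm_cart order_trans by blast+
      then have "\<bar>f (x $ j) - f (y $ j)\<bar> \<le> B * \<bar>x $ j - y $ j\<bar>" by (rule B)
      also have "\<dots> \<le> B * norm (x - y)"
        using component_le_norm_cart[of "x - y" j] \<open>B \<ge> 0\<close>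
        by (intro mult_left_mono) auto
      finally show ?thesis
        using False by (simp add: X_def Y_def)
    qed
    have comp: "\<bar>(lf_field (abs_flow f a) l x u - lf_field (abs_flow f a) l y u) $ i\<bar>
        \<le> 2 * n * B * norm (x - y)" for i
      using abs_flow_diff_bound[where X=X and Y=Y, OF f_diff] \<open>B \<ge> 0\<close>
      by (simp add: lf_field_def X_def[symmetric] Y_def[symmetric] n_def mult.assoc)
    have "(\<Sum>i\<in>UNIV. \<bar>(lf_field (abs_flow f a) l x u - lf_field (abs_flow f a) l y u) $ i\<bar>)
        \<le> n * (2 * n * B * norm (x - y))"
      unfolding n_def by (intro sum_bounded_above comp[unfolded n_def])
    with norm_le_l1_cart show ?thesis
      by (metis mult.assoc order_trans)
  qed
  then show "\<exists>L. \<forall>x y u. norm x \<le> R \<longrightarrow> norm y \<le> R \<longrightarrow>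
      norm (lf_field (abs_flow f a) l x u - lf_field (abs_flow f a) l y u) \<le> L * norm (x - y)"
    by blast
qed

lemma not_lf_accessible_abs_flow_if_coupling_equivariant:
  fixes a :: "'v::finite \<Rightarrow> 'v \<Rightarrow> real"
  assumes aut: "graph_automorphism a \<phi>" and "\<phi> \<noteq> id" and "\<phi> l = l" and "c l = 1"
    and "smooth_fun f"
    and "coupling_equivariant a f c \<phi>"
  shows "\<not> lf_accessible (abs_flow f a) l 0"
proof -
  obtain i where "\<phi> i \<noteq> i"
    using \<open>\<phi> \<noteq> id\<close> by (auto simp: fun_eq_iff)
  have "inj \<phi>"
    using aut by (simp add: graph_automorphism_def bij_is_inj)
  show ?thesis
  proof (rule not_lf_accessible_if_equivariant)
    show "bounded_linear (signed_permutation c \<phi>)"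
      by (rule bounded_linear_signed_permutation)
    show "lf_field (abs_flow f a) l (signed_permutation c \<phi> x) u
        = signed_permutation c \<phi> (lf_field (abs_flow f a) l x u)" for x u
      using lf_field_signed_permutation abs_flow_signed_permutation[OF aut \<open>coupling_equivariant a f c \<phi>\<close>]
        \<open>inj \<phi>\<close> \<open>\<phi> l = l\<close> \<open>c l = 1\<close> by blast
    show "lf_locally_lipschitz (abs_flow f a) l"
      using \<open>smooth_fun f\<close> by (rule lf_locally_lipschitz_abs_flow)
    show "axis i 1 $ l = 0"
      using \<open>\<phi> i \<noteq> i\<close> \<open>\<phi> l = l\<close> by (auto simp: axis_def)
    have "signed_permutation c \<phi> (axis i 1) $ i = 0"
      using \<open>\<phi> i \<noteq> i\<close> by (simp add: signed_permutation_def axis_def)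
    then show "signed_permutation c \<phi> (axis i 1) \<noteq> axis i (1::real)"
      by (metis axis_nth zero_neq_one)
  qed
qed

lemma coupling_equivariant_gauge_odd:
  assumes gauge: "balanced_with_gauge a \<sigma>" and aut: "graph_automorphism a \<phi>"
    and odd: "\<And>x. f (- x) = - f x"
  shows "coupling_equivariant a f (\<lambda>i. \<sigma> i * \<sigma> (\<phi> i)) \<phi>"
  unfolding coupling_equivariant_def
proof (intro allI impI)
  fix i j z w assume "a i j \<noteq> 0"
  have \<sigma>: "\<sigma> k = 1 \<or> \<sigma> k = -1" for k
    using gauge by (simp add: balanced_with_gauge_def)
  have "sgn (a i j) = \<sigma> i * \<sigma> j" "sgn (a (\<phi> i) (\<phi> j)) = \<sigma> (\<phi> i) * \<sigma> (\<phi> j)"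
    using gauge aut \<open>a i j \<noteq> 0\<close> by (auto simp: balanced_with_gauge_def graph_automorphism_def)
  moreover have "f (\<sigma> k * \<sigma> (\<phi> k) * x) = \<sigma> k * \<sigma> (\<phi> k) * f x" for k x
    using \<sigma>[of k] \<sigma>[of "\<phi> k"] odd by auto
  ultimately show "f (\<sigma> i * \<sigma> (\<phi> i) * z) - sgn (a i j) * f (\<sigma> j * \<sigma> (\<phi> j) * w)
      = \<sigma> i * \<sigma> (\<phi> i) * (f z - sgn (a (\<phi> i) (\<phi> j)) * f w)"
    using \<sigma>[of j] \<sigma>[of "\<phi> i"] by (auto simp: algebra_simps)
qed

lemma coupling_equivariant_sign_preserving:
  assumes "\<And>i j. a i j \<noteq> 0 \<Longrightarrow> sgn (a i j) = sgn (a (\<phi> i) (\<phi> j))"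
  shows "coupling_equivariant a f (\<lambda>_. 1) \<phi>"
  using assms by (simp add: coupling_equivariant_def)

theorem theorem4:
  fixes a :: "'v::finite \<Rightarrow> 'v \<Rightarrow> real" and \<sigma> :: "'v \<Rightarrow> real"
    and \<phi> :: "'v \<Rightarrow> 'v" and l :: 'v
  assumes "signed_graph a"
    and "balanced_with_gauge a \<sigma>"
    and "graph_automorphism a \<phi>"
    and "\<phi> \<noteq> id"
    and "\<phi> l = l"
  shows "(\<forall>f. smooth_fun f \<and> (\<forall>x. f (- x) = - f x) \<longrightarrow> \<not> lf_accessible (abs_flow f a) l 0)
       \<and> ((\<forall>i j. a i j \<noteq> 0 \<longrightarrow> sgn (a i j) = sgn (a (\<phi> i) (\<phi> j))) \<longrightarrow>
           (\<forall>f. smooth_fun f \<and> (\<forall>x. f (- x) = f x) \<longrightarrow> \<not> lf_accessible (abs_flow f a) l 0))"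
proof (intro conjI allI impI; elim conjE)
  fix f assume "smooth_fun f" and odd: "\<forall>x. f (- x) = - f x"
  have "\<sigma> l * \<sigma> (\<phi> l) = 1"
    using assms(2,5) unfolding balanced_with_gauge_def by (metis mult_1 mult_minus1_right minus_minus)
  with \<open>smooth_fun f\<close> odd show "\<not> lf_accessible (abs_flow f a) l 0"
    by (intro not_lf_accessible_abs_flow_if_coupling_equivariant[OF assms(3-5),
          where c="\<lambda>i. \<sigma> i * \<sigma> (\<phi> i)"] coupling_equivariant_gauge_odd[OF assms(2,3)]) auto
next
  fix f assume sign: "\<forall>i j. a i j \<noteq> 0 \<longrightarrow> sgn (a i j) = sgn (a (\<phi> i) (\<phi> j))"
    and "smooth_fun f"
  then show "\<not> lf_accessible (abs_flow f a) l 0"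
    by (intro not_lf_accessible_abs_flow_if_coupling_equivariant[OF assms(3-5), where c="\<lambda>_. 1"]
        coupling_equivariant_sign_preserving) auto
qed

end
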